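(* Let $p,q$ be primes and $c,d\in\mathbb N$. In the algebra $(\mathbb N,\cdot,\mathbb N)$, $$p:q::_m c:d\iff (p=q\text{ and }c=d)\ \text{or}\ (p\neq q\text{ and }c=pu\text{ and }d=qu\text{ for some }u\in\mathbb N).$$
   Context: $(\mathbb N,\cdot,\mathbb N)$ is the algebra with universe the natural numbers $\mathbb N$, multiplication, and every natural number as a constant. A justification is a pair of terms $s\to t$ with the variables of $t$ among those of $s$; monolinear justifications are those where $s,t$ contain only one fixed variable $x$, occurring at most once in $s$ and at most once in $t$. $\uparrow^m(a\to b)$ is the set of monolinear justifications $s\to t$ with $a=s(\mathbf o)$, $b=t(\mathbf o)$ for some value $\mathbf o$; $\uparrow^m(a\to b:\!\cdot\,c\to d):=\uparrow^m(a\to b)\cap\uparrow^m(c\to d)$. A monolinear justification is trivial if it lies in all sets $\uparrow^m(a'\to b':\!\cdot\,c'\to d')$. $a\to b:\!\cdot_m\,c\to d$ holds iff either (i) all justifications in $\uparrow^m(a\to b)\cup\uparrow^m(c\to d)$ are trivial, or (ii) $J_d:=\uparrow^m(a\to b:\!\cdot\,c\to d)$ contains a non-trivial justification and for every $d'$, $J_d\subseteq J_{d'}$ implies $J_{d'}$ contains a non-trivial justification and $J_{d'}\subseteq J_d$ (ignoring trivial justifications). $a:b::_m c:d$ iff $a\to b:\!\cdot_m\,c\to d$, $b\to a:\!\cdot_m\,d\to c$, $c\to d:\!\cdot_m\,a\to b$, $d\to c:\!\cdot_m\,b\to a$ all hold. *)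

theory Defs
  imports "HOL-Computational_Algebra.Primes"
begin

text \<open>Terms of the algebra (N, *, N) in the single fixed variable x:
  the variable, a constant for every natural number, and multiplication.\<close>
datatype mterm = X | Cst nat | Mul mterm mterm

primrec eval :: "nat \<Rightarrow> mterm \<Rightarrow> nat" where
  "eval v X = v"
| "eval v (Cst n) = n"
| "eval v (Mul s t) = eval v s * eval v t"

primrec xcount :: "mterm \<Rightarrow> nat" where
  "xcount X = 1"
| "xcount (Cst n) = 0"
| "xcount (Mul s t) = xcount s + xcount t"

text \<open>A justification s -> t (variables of t among those of s) which is monolinear.\<close>
definition monolinear :: "mterm \<times> mterm \<Rightarrow> bool" where
  "monolinear j \<longleftrightarrow> xcount (fst j) \<le> 1 \<and> xcount (snd j) \<le> 1 \<and>
     (xcount (snd j) > 0 \<longrightarrow> xcount (fst j) > 0)"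

definition up :: "nat \<Rightarrow> nat \<Rightarrow> (mterm \<times> mterm) set" where
  "up a b = {j. monolinear j \<and> (\<exists>v. a = eval v (fst j) \<and> b = eval v (snd j))}"

definition up2 :: "nat \<Rightarrow> nat \<Rightarrow> nat \<Rightarrow> nat \<Rightarrow> (mterm \<times> mterm) set" where
  "up2 a b c d = up a b \<inter> up c d"

definition trivial :: "mterm \<times> mterm \<Rightarrow> bool" where
  "trivial j \<longleftrightarrow> monolinear j \<and> (\<forall>a' b' c' d'. j \<in> up2 a' b' c' d')"

definition nontriv :: "(mterm \<times> mterm) set \<Rightarrow> (mterm \<times> mterm) set" where
  "nontriv J = {j \<in> J. \<not> trivial j}"

definition arrow_prop :: "nat \<Rightarrow> nat \<Rightarrow> nat \<Rightarrow> nat \<Rightarrow> bool" where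
  "arrow_prop a b c d \<longleftrightarrow>
     (\<forall>j \<in> up a b \<union> up c d. trivial j) \<or>
     (nontriv (up2 a b c d) \<noteq> {} \<and>
      (\<forall>d'. nontriv (up2 a b c d) \<subseteq> nontriv (up2 a b c d') \<longrightarrow>
             nontriv (up2 a b c d') \<noteq> {} \<and> nontriv (up2 a b c d') \<subseteq> nontriv (up2 a b c d)))"

definition analogy :: "nat \<Rightarrow> nat \<Rightarrow> nat \<Rightarrow> nat \<Rightarrow> bool" where
  "analogy a b c d \<longleftrightarrow> arrow_prop a b c d \<and> arrow_prop b a d c \<and>
     arrow_prop c d a b \<and> arrow_prop d c b a"

end

theory Submission
  imports Defs
begin

text \<open>Every term evaluates to \<open>k * v ^ e\<close>, and monolinearity leaves only the shapes
  \<open>k \<rightarrow> l\<close>, \<open>k x \<rightarrow> l\<close> and \<open>k x \<rightarrow> l x\<close>. No justification is trivial, since none lies in both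
  \<open>\<up>(1 \<rightarrow> 0)\<close> and \<open>\<up>(0 \<rightarrow> 1)\<close>; so \<open>a \<rightarrow> b :\<cdot>\<^sub>m c \<rightarrow> d\<close> forces a common justification of
  \<open>a \<rightarrow> b\<close> and \<open>c \<rightarrow> d\<close>, and holds as soon as some common justification determines \<open>d\<close> from \<open>c\<close>.
  For coprime \<open>a, b\<close> the value of \<open>x\<close> in a linear justification \<open>k x \<rightarrow> l x\<close> of \<open>a \<rightarrow> b\<close> must
  be \<open>1\<close>, so a common justification with \<open>c \<rightarrow> d\<close> gives \<open>c = a u, d = b u\<close> or a constant
  target \<open>d = b\<close>; using the symmetric arrow \<open>b \<rightarrow> a :\<cdot>\<^sub>m d \<rightarrow> c\<close> as well excludes the
  degenerate case. Conversely \<open>a x \<rightarrow> b x\<close> witnesses \<open>a : b :: a u : b u\<close>, and \<open>x \<rightarrow> x\<close> witnesses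
  \<open>a : a :: c : c\<close>.\<close>

primrec mterm_coeff :: "mterm \<Rightarrow> nat" where
  "mterm_coeff X = 1"
| "mterm_coeff (Cst n) = n"
| "mterm_coeff (Mul s t) = mterm_coeff s * mterm_coeff t"

lemma eval_eq_coeff_mult_power: "eval v t = mterm_coeff t * v ^ xcount t"
  by (induct t) (auto simp: power_add ac_simps)

lemma mem_up_iff:
  "(s, t) \<in> up a b \<longleftrightarrow> monolinear (s, t) \<and>
     (\<exists>v. a = mterm_coeff s * v ^ xcount s \<and> b = mterm_coeff t * v ^ xcount t)"
  by (simp add: up_def eval_eq_coeff_mult_power)

lemma monolinear_cases:
  assumes "monolinear (s, t)"
  obtains "xcount s = 0" "xcount t = 0"
        | "xcount s = 1" "xcount t = 0"
        | "xcount s = 1" "xcount t = 1"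
  using assms unfolding monolinear_def by force

lemma not_trivial: "\<not> trivial j"
proof
  assume "trivial j"
  obtain s t where j: "j = (s, t)" by (cases j)
  from \<open>trivial j\<close> have "j \<in> up 1 0" "j \<in> up 0 1"
    unfolding trivial_def up2_def by blast+
  then obtain v w where "monolinear (s, t)"
    and "1 = mterm_coeff s * v ^ xcount s" "0 = mterm_coeff t * v ^ xcount t"
    and "0 = mterm_coeff s * w ^ xcount s" "1 = mterm_coeff t * w ^ xcount t"
    unfolding j mem_up_iff by blast
  then show False
    by (cases rule: monolinear_cases) auto
qed

lemma arrow_prop_common_justification:
  assumes "arrow_prop a b c d"
  obtains j where "j \<in> up a b" "j \<in> up c d"
proof -
  have "(Cst a, Cst b) \<in> up a b"
    by (simp add: mem_up_iff monolinear_def)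
  with assms not_trivial have "nontriv (up2 a b c d) \<noteq> {}"
    unfolding arrow_prop_def by blast
  then show ?thesis
    using that unfolding nontriv_def up2_def by blast
qed

lemma arrow_propI:
  assumes "j \<in> up a b" "j \<in> up c d" and determines: "\<And>d'. j \<in> up c d' \<Longrightarrow> d' = d"
  shows "arrow_prop a b c d"
proof -
  have j: "j \<in> nontriv (up2 a b c d)"
    using assms not_trivial unfolding nontriv_def up2_def by blast
  have "nontriv (up2 a b c d') \<noteq> {} \<and> nontriv (up2 a b c d') \<subseteq> nontriv (up2 a b c d)"
    if "nontriv (up2 a b c d) \<subseteq> nontriv (up2 a b c d')" for d'
  proof -
    from that j have "j \<in> up c d'"
      unfolding nontriv_def up2_def by blast
    then have "d' = d" by (rule determines)
    then show ?thesis using j by blast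
  qed
  with j show ?thesis
    unfolding arrow_prop_def by blast
qed

lemma common_justification_with_constant_pair:
  assumes "j \<in> up a b" "j \<in> up c c" "c > 0"
  shows "a = b \<or> b = c"
proof -
  obtain s t where j: "j = (s, t)" by (cases j)
  from assms obtain v w where "monolinear (s, t)"
    and ab: "a = mterm_coeff s * v ^ xcount s" "b = mterm_coeff t * v ^ xcount t"
    and cc: "c = mterm_coeff s * w ^ xcount s" "c = mterm_coeff t * w ^ xcount t"
    unfolding j mem_up_iff by blast
  then show ?thesis
  proof (cases rule: monolinear_cases)
    case 3
    with cc \<open>c > 0\<close> have "mterm_coeff s = mterm_coeff t" by auto
    with ab 3 show ?thesis by simp
  qed (use ab cc in auto)
qed

lemma common_justification_coprime:
  assumes "coprime a b" "j \<in> up a b" "j \<in> up c d"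
  shows "(\<exists>u. c = a * u \<and> d = b * u) \<or> d = b"
proof -
  obtain s t where j: "j = (s, t)" by (cases j)
  from assms obtain v w where "monolinear (s, t)"
    and ab: "a = mterm_coeff s * v ^ xcount s" "b = mterm_coeff t * v ^ xcount t"
    and cd: "c = mterm_coeff s * w ^ xcount s" "d = mterm_coeff t * w ^ xcount t"
    unfolding j mem_up_iff by blast
  then show ?thesis
  proof (cases rule: monolinear_cases)
    case 3
    with ab have "v dvd a" "v dvd b" by simp_all
    with \<open>coprime a b\<close> have "v = 1"
      using coprime_common_divisor_nat by blast
    with ab cd 3 show ?thesis by auto
  qed (use ab cd in auto)
qed

lemma arrow_prop_identity: "arrow_prop a a c c"
  by (rule arrow_propI[where j = "(X, X)"]) (auto simp: mem_up_iff monolinear_def)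

lemma arrow_prop_scaled:
  assumes "a > 0"
  shows "arrow_prop a b (a * u) (b * u)" and "arrow_prop (a * u) (b * u) a b"
proof -
  let ?j = "(Mul (Cst a) X, Mul (Cst b) X)"
  have "?j \<in> up (a * v) (b * v)" for v
    by (auto simp: mem_up_iff monolinear_def)
  moreover have "d' = b * v" if "?j \<in> up (a * v) d'" for v d'
    using that assms by (auto simp: mem_up_iff)
  ultimately show "arrow_prop a b (a * u) (b * u)" "arrow_prop (a * u) (b * u) a b"
    using arrow_propI[of ?j] by (metis mult.right_neutral)+
qed

lemma analogy_identity: "analogy a a c c"
  unfolding analogy_def by (simp add: arrow_prop_identity)

lemma analogy_scaled:
  assumes "a > 0" "b > 0"
  shows "analogy a b (a * u) (b * u)"
  unfolding analogy_def using assms by (simp add: arrow_prop_scaled)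

lemma analogy_same_base:
  assumes "analogy a a c d" "a > 0"
  shows "c = d"
proof -
  from assms(1) have "arrow_prop c d a a" "arrow_prop d c a a"
    unfolding analogy_def by auto
  then obtain j k where "j \<in> up c d" "j \<in> up a a" "k \<in> up d c" "k \<in> up a a"
    by (metis arrow_prop_common_justification)
  with \<open>a > 0\<close> have "c = d \<or> d = a" "d = c \<or> c = a"
    using common_justification_with_constant_pair by blast+
  then show ?thesis by auto
qed

lemma analogy_coprime:
  assumes "analogy a b c d" "coprime a b"
  shows "\<exists>u. c = a * u \<and> d = b * u"
proof -
  from assms(1) have "arrow_prop a b c d" "arrow_prop b a d c"
    unfolding analogy_def by auto
  then obtain j k where "j \<in> up a b" "j \<in> up c d" "k \<in> up b a" "k \<in> up d c"
    by (metis arrow_prop_common_justification)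
  with \<open>coprime a b\<close> have "(\<exists>u. c = a * u \<and> d = b * u) \<or> d = b"
    "(\<exists>u. d = b * u \<and> c = a * u) \<or> c = a"
    using common_justification_coprime coprime_commute by blast+
  then show ?thesis by (metis mult.right_neutral)
qed

theorem mainTheorem11:
  fixes p q c d :: nat
  assumes "prime p" and "prime q"
  shows "analogy p q c d \<longleftrightarrow>
           ((p = q \<and> c = d) \<or> (p \<noteq> q \<and> (\<exists>u. c = p * u \<and> d = q * u)))"
proof (cases "p = q")
  case True
  with \<open>prime p\<close> show ?thesis
    using analogy_same_base analogy_identity prime_gt_0_nat by blast
next
  case False
  with assms have "coprime p q"
    by (simp add: primes_coprime)
  with assms False show ?thesis
    using analogy_coprime analogy_scaled prime_gt_0_nat by blast
qed

end
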